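(* Let $(X_i)_{i=1}^\infty$ be independent random variables with $X_i\sim\mathrm{Exp}(i)$, and let $M=\sup_{i\ge1}X_i$. Then $$E(M)=\frac{4\sqrt3}{3}\pi-6\approx 1.255,\qquad V(M)=-\frac{28}{3}\pi^2-16\sqrt3\,\pi+180\approx 0.821 .$$
   Context: $\mathrm{Exp}(\lambda)$ denotes the exponential distribution with rate $\lambda$, i.e. density $\lambda e^{-\lambda x}$ on $x\ge0$. $M$ is almost surely finite; its distribution function is $P(M\le t)=\prod_{m=1}^\infty(1-e^{-mt})$ for $t\ge0$. $V$ denotes variance. *)

theory Defs
  imports "HOL-Probability.Probability"
begin

end

theory Submission
  imports Defs
begin

text \<open>By independence, \<open>P(M \<le> t)\<close> is the Euler product \<open>\<Prod>(m \<ge> 1) (1 - q^m)\<close> with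
  \<open>q = e^(-t)\<close>, so Euler's pentagonal number theorem writes \<open>P(M > t)\<close> as the alternating series
  \<open>\<Sum>(k \<ge> 1) (-1)^(k+1) (q^(k(3k-1)/2) + q^(k(3k+1)/2))\<close>. Integrating it termwise against
  \<open>n t^(n-1) dt\<close> gives \<open>E(M^n)\<close> as the same series with each \<open>q^p\<close> replaced by \<open>n!/p^n\<close>.
  For \<open>n = 1, 2\<close>, partial fractions turn these series into digamma and trigamma values at
  \<open>1/3, 1/2, 2/3, 5/6, 7/6\<close>, which the reflection formulas make elementary.\<close>

section \<open>Reflection formulas on the real line\<close>

lemma Gamma_reflection_real:
  assumes "0 < x" "x < 1"
  shows "Gamma x * Gamma (1 - x) = pi / sin (pi * x)"
proof -
  have "complex_of_real (Gamma x * Gamma (1 - x)) = Gamma (of_real x) * Gamma (1 - of_real x)"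
    by (simp add: Gamma_complex_of_real[symmetric])
  also have "\<dots> = of_real pi / sin (of_real pi * of_real x)"
    by (rule Gamma_reflection_complex)
  also have "\<dots> = complex_of_real (pi / sin (pi * x))"
    by (simp add: sin_of_real[symmetric])
  finally show ?thesis by (simp only: of_real_eq_iff)
qed

text \<open>The two reflection formulas below are obtained by differentiating the previous one.\<close>

lemma Digamma_reflection_real:
  assumes "0 < x" "x < 1"
  shows "Digamma x - Digamma (1 - x) = - pi * cos (pi * x) / sin (pi * x)"
proof -
  have sin_pos: "sin (pi * x) > 0" using assms by (intro sin_gt_zero) auto
  have "((\<lambda>y. pi / sin (pi * y)) has_field_derivative
          pi / sin (pi * x) * (- pi * cos (pi * x) / sin (pi * x))) (at x)"
    using sin_pos by (auto intro!: derivative_eq_intros simp: field_simps power2_eq_square)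
  then have "((\<lambda>y. Gamma y * Gamma (1 - y)) has_field_derivative
               pi / sin (pi * x) * (- pi * cos (pi * x) / sin (pi * x))) (at x)"
    by (rule has_field_derivative_transform_within_open[where S = "{0<..<1}"])
       (use assms in \<open>auto simp: Gamma_reflection_real\<close>)
  moreover have "((\<lambda>y. Gamma y * Gamma (1 - y)) has_field_derivative
          Gamma x * Gamma (1 - x) * (Digamma x - Digamma (1 - x))) (at x)"
    using assms by (auto intro!: derivative_eq_intros simp: algebra_simps)
  ultimately have "pi / sin (pi * x) * (Digamma x - Digamma (1 - x))
                   = pi / sin (pi * x) * (- pi * cos (pi * x) / sin (pi * x))"
    using assms by (metis DERIV_unique Gamma_reflection_real)
  then show ?thesis
    using sin_pos by (subst (asm) mult_left_cancel) auto
qed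

lemma Polygamma_1_reflection_real:
  assumes "0 < x" "x < 1"
  shows "Polygamma 1 x + Polygamma 1 (1 - x) = pi\<^sup>2 / (sin (pi * x))\<^sup>2"
proof -
  have sin_pos: "sin (pi * x) > 0" using assms by (intro sin_gt_zero) auto
  have "((\<lambda>y. - pi * cos (pi * y) / sin (pi * y)) has_field_derivative
          ((- pi * (- sin (pi * x) * pi)) * sin (pi * x) - (- pi * cos (pi * x)) * (cos (pi * x) * pi))
            / (sin (pi * x) * sin (pi * x))) (at x)"
    using sin_pos by (intro derivative_eq_intros refl) auto
  also have "((- pi * (- sin (pi * x) * pi)) * sin (pi * x) - (- pi * cos (pi * x)) * (cos (pi * x) * pi))
               / (sin (pi * x) * sin (pi * x)) = pi\<^sup>2 / (sin (pi * x))\<^sup>2"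
    using sin_cos_squared_add3[of "pi * x"] by (simp add: power2_eq_square algebra_simps flip: distrib_left)
  finally have "((\<lambda>y. Digamma y - Digamma (1 - y)) has_field_derivative pi\<^sup>2 / (sin (pi * x))\<^sup>2) (at x)"
    by (rule has_field_derivative_transform_within_open[where S = "{0<..<1}"])
       (use assms in \<open>auto simp: Digamma_reflection_real\<close>)
  moreover have "((\<lambda>y. Digamma y - Digamma (1 - y)) has_field_derivative
          Polygamma 1 x + Polygamma 1 (1 - x)) (at x)"
    using assms by (auto intro!: derivative_eq_intros)
  ultimately show ?thesis by (simp add: DERIV_unique)
qed

section \<open>Euler's pentagonal number theorem\<close>

fun triangular :: "nat \<Rightarrow> nat" where
  "triangular 0 = 0"
| "triangular (Suc k) = triangular k + Suc k"

definition pent_plus :: "nat \<Rightarrow> nat" where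
  "pent_plus k = k * k + triangular k"

definition pent_minus :: "nat \<Rightarrow> nat" where
  "pent_minus k = (k - 1) * k + triangular k"

lemma of_nat_triangular: "2 * real (triangular k) = real k * (real k + 1)"
  by (induction k) (auto simp: algebra_simps)

lemma of_nat_pent_plus: "real (pent_plus k) = real k * (3 * real k + 1) / 2"
  using of_nat_triangular[of k] by (simp add: pent_plus_def algebra_simps)

lemma of_nat_pent_minus: "real (pent_minus k) = real k * (3 * real k - 1) / 2"
  using of_nat_triangular[of k] by (cases k) (simp_all add: pent_minus_def algebra_simps)

lemma pent_plus_pos: "0 < k \<Longrightarrow> 0 < pent_plus k"
  by (simp add: pent_plus_def)

lemma pent_minus_pos: "0 < k \<Longrightarrow> 0 < pent_minus k"
  by (cases k) (simp_all add: pent_minus_def)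

lemma pent_plus_le_Suc: "pent_plus k \<le> pent_plus (Suc k)"
  by (simp add: pent_plus_def)

lemma pent_minus_le_Suc: "pent_minus k \<le> pent_minus (Suc k)"
  by (cases k) (simp_all add: pent_minus_def)

definition shanks_term :: "'a::comm_ring_1 \<Rightarrow> nat \<Rightarrow> nat \<Rightarrow> 'a" where
  "shanks_term q n k = (\<Prod>m\<in>{k<..n}. 1 - q ^ m) * q ^ (n * k + triangular k)"

definition shanks_sum :: "'a::comm_ring_1 \<Rightarrow> nat \<Rightarrow> 'a" where
  "shanks_sum q n = (\<Sum>k\<le>n. (-1) ^ k * shanks_term q n k)"

definition pentagonal_sum :: "'a::comm_ring_1 \<Rightarrow> nat \<Rightarrow> 'a" where
  "pentagonal_sum q n = 1 + (\<Sum>k=1..n. (-1) ^ k * (q ^ pent_plus k + q ^ pent_minus k))"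

lemma shanks_sum_Suc:
  "shanks_sum q (Suc n) = shanks_sum q n + (-1) ^ Suc n * (q ^ pent_plus (Suc n) + q ^ pent_minus (Suc n))"
proof -
  define U where "U k = (\<Prod>m\<in>{k..n}. 1 - q ^ m) * q ^ (triangular k + n * k)" for k
  \<comment> \<open>The increment of every term of the sum is a difference of consecutive values of \<open>U\<close>.\<close>
  have telescoping: "(-1) ^ k * (shanks_term q (Suc n) k - shanks_term q n k)
                       = (-1) ^ Suc k * U (Suc k) - (-1) ^ k * U k" if "k \<le> n" for k
  proof -
    define Q where "Q = (\<Prod>m\<in>{k<..n}. 1 - q ^ m) * q ^ (n * k + triangular k)"
    have "{k<..Suc n} = insert (Suc n) {k<..n}" "{k..n} = insert k {k<..n}" "{Suc k..n} = {k<..n}"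
      using that by auto
    then have "shanks_term q (Suc n) k = (1 - q ^ Suc n) * Q * q ^ k" "shanks_term q n k = Q"
      "U k = (1 - q ^ k) * Q" "U (Suc k) = Q * q ^ (k + 1 + n)"
      by (simp_all add: shanks_term_def U_def Q_def algebra_simps power_add)
    then show ?thesis by (simp only:) (simp add: algebra_simps power_add)
  qed
  have "(\<Sum>k\<le>n. (-1) ^ k * (shanks_term q (Suc n) k - shanks_term q n k))
          = (\<Sum>k<Suc n. (-1) ^ Suc k * U (Suc k) - (-1) ^ k * U k)"
    using telescoping by (simp add: lessThan_Suc_atMost)
  also have "\<dots> = (-1) ^ Suc n * U (Suc n) - U 0"
    by (subst sum_lessThan_telescope) simp
  also have "U 0 = 0"
    by (auto simp: U_def intro!: prod_zero bexI[of _ 0])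
  also have "U (Suc n) = q ^ pent_minus (Suc n)"
    by (simp add: U_def pent_minus_def algebra_simps)
  finally have "(\<Sum>k\<le>n. (-1) ^ k * shanks_term q (Suc n) k)
                  = shanks_sum q n + (-1) ^ Suc n * q ^ pent_minus (Suc n)"
    by (simp add: shanks_sum_def sum_subtractf algebra_simps)
  moreover have "shanks_term q (Suc n) (Suc n) = q ^ pent_plus (Suc n)"
    by (simp add: shanks_term_def pent_plus_def algebra_simps)
  ultimately show ?thesis
    by (simp add: shanks_sum_def algebra_simps)
qed

lemma shanks_identity: "shanks_sum q n = pentagonal_sum q n"
proof (induction n)
  case 0
  then show ?case by (simp add: shanks_sum_def pentagonal_sum_def shanks_term_def)
next
  case (Suc n)
  then show ?case by (simp add: shanks_sum_Suc pentagonal_sum_def)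
qed

lemma pentagonal_sum_minus_prod_tendsto_0:
  fixes q :: real
  assumes "0 \<le> q" "q < 1"
  shows "(\<lambda>n. pentagonal_sum q n - (\<Prod>m=1..n. 1 - q ^ m)) \<longlonglongrightarrow> 0"
proof (rule Lim_null_comparison)
  show "(\<lambda>n. real n * q ^ n) \<longlonglongrightarrow> 0"
    by (rule powser_times_n_limit_0) (use assms in auto)
  show "\<forall>\<^sub>F n in sequentially. norm (pentagonal_sum q n - (\<Prod>m=1..n. 1 - q ^ m)) \<le> real n * q ^ n"
  proof (intro always_eventually allI)
    fix n :: nat
    have "{..n} = insert 0 {1..n}" by auto
    then have "pentagonal_sum q n - (\<Prod>m=1..n. 1 - q ^ m) = (\<Sum>k=1..n. (-1) ^ k * shanks_term q n k)"
      by (simp flip: shanks_identity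
               add: shanks_sum_def shanks_term_def greaterThan_0 atLeastSucAtMost_greaterThanAtMost)
    also have "norm \<dots> \<le> (\<Sum>k=1..n. norm ((-1) ^ k * shanks_term q n k))"
      by (rule norm_sum)
    also have "\<dots> \<le> (\<Sum>k=1..n. q ^ n)"
    proof (rule sum_mono)
      fix k assume k: "k \<in> {1..n}"
      have "0 \<le> (\<Prod>m\<in>{k<..n}. 1 - q ^ m)" "(\<Prod>m\<in>{k<..n}. 1 - q ^ m) \<le> 1"
        using assms by (auto intro!: prod_nonneg prod_le_1 simp: power_le_one)
      moreover have "q ^ (n * k + triangular k) \<le> q ^ n"
        by (rule power_decreasing) (use assms k in \<open>auto simp: trans_le_add1\<close>)
      ultimately show "norm ((-1) ^ k * shanks_term q n k) \<le> q ^ n"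
        using assms by (simp add: shanks_term_def abs_mult mult_le_one)
          (meson mult_left_le_one_le order_trans zero_le_power)
    qed
    also have "\<dots> = real n * q ^ n" by simp
    finally show "norm (pentagonal_sum q n - (\<Prod>m=1..n. 1 - q ^ m)) \<le> real n * q ^ n" .
  qed
qed

text \<open>Grouping the terms of the pentagonal series in pairs of consecutive signs gives nonnegative
  terms for \<open>0 \<le> q \<le> 1\<close>; this is what allows termwise integration below.\<close>

definition pent_block :: "'a::comm_ring_1 \<Rightarrow> nat \<Rightarrow> 'a" where
  "pent_block q j = (q ^ pent_plus (2*j+1) + q ^ pent_minus (2*j+1))
                  - (q ^ pent_plus (2*j+2) + q ^ pent_minus (2*j+2))"

lemma pent_block_nonneg:
  fixes q :: real
  assumes "0 \<le> q" "q \<le> 1"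
  shows "0 \<le> pent_block q j"
  using power_decreasing[OF pent_plus_le_Suc[of "2*j+1"] assms]
        power_decreasing[OF pent_minus_le_Suc[of "2*j+1"] assms]
  by (simp add: pent_block_def)

lemma pentagonal_sum_even: "pentagonal_sum q (2 * N) = 1 - (\<Sum>j<N. pent_block q j)"
  by (induction N) (simp_all add: pentagonal_sum_def pent_block_def)

lemma pent_block_sums:
  fixes q :: real
  assumes "0 \<le> q" "q < 1" and "(\<lambda>n. \<Prod>m=1..n. 1 - q ^ m) \<longlonglongrightarrow> L"
  shows "pent_block q sums (1 - L)"
proof -
  have "(\<lambda>n. (pentagonal_sum q n - (\<Prod>m=1..n. 1 - q ^ m)) + (\<Prod>m=1..n. 1 - q ^ m)) \<longlonglongrightarrow> 0 + L"
    by (intro tendsto_add pentagonal_sum_minus_prod_tendsto_0 assms)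
  then have "pentagonal_sum q \<longlonglongrightarrow> L" by simp
  then have "(\<lambda>N. pentagonal_sum q (2 * N)) \<longlonglongrightarrow> L"
    by (rule LIMSEQ_subseq_LIMSEQ[unfolded comp_def]) (simp add: strict_mono_def)
  then have "(\<lambda>N. 1 - pentagonal_sum q (2 * N)) \<longlonglongrightarrow> 1 - L"
    by (intro tendsto_diff tendsto_const)
  then show ?thesis
    by (simp add: sums_def pentagonal_sum_even)
qed

section \<open>Digamma and trigamma series\<close>

lemma Digamma_diff_sums:
  fixes a b :: real
  assumes "a > 0" "b > 0"
  shows "(\<lambda>j. 1 / (real j + a) - 1 / (real j + b)) sums (Digamma b - Digamma a)"
proof -
  have "(\<lambda>k. inverse (of_nat (Suc k)) - inverse (c + of_nat k)) sums (Digamma c + euler_mascheroni)"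
    if "c > 0" for c :: real
    using summable_Digamma[of c] that by (simp add: Digamma_def summable_sums)
  from sums_diff[OF this[of b] this[of a]] assms show ?thesis
    by (simp add: inverse_eq_divide add.commute)
qed

lemma Polygamma_1_sums:
  fixes a :: real
  assumes "a > 0"
  shows "(\<lambda>j. 1 / (real j + a)\<^sup>2) sums Polygamma 1 a"
  using Polygamma_LIMSEQ[of a 1] assms by (simp add: inverse_eq_divide add.commute power2_eq_square)

lemma Digamma_two_thirds_minus_one_third: "Digamma (2/3) - Digamma (1/3::real) = pi / sqrt 3"
proof -
  have "Digamma (1/3) - Digamma (1 - 1/3::real) = - pi * cos (pi / 3) / sin (pi / 3)"
    using Digamma_reflection_real[of "1/3"] by simp
  then show ?thesis by (simp add: sin_60 cos_60 field_simps)
qed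

lemma Digamma_five_sixths_minus_seven_sixths: "Digamma (5/6) - Digamma (7/6::real) = pi * sqrt 3 - 6"
proof -
  have "Digamma (1/6) - Digamma (1 - 1/6::real) = - pi * cos (pi / 6) / sin (pi / 6)"
    using Digamma_reflection_real[of "1/6"] by simp
  moreover have "Digamma (1/6 + 1 :: real) = Digamma (1/6) + 1 / (1/6)"
    by (rule Digamma_plus1) simp
  ultimately show ?thesis by (simp add: sin_30 cos_30 field_simps)
qed

lemma Polygamma_1_thirds: "Polygamma 1 (1/3) + Polygamma 1 (2/3::real) = 4 * pi\<^sup>2 / 3"
  using Polygamma_1_reflection_real[of "1/3"] by (simp add: sin_60 power_divide)

lemma Polygamma_1_five_sixths_plus_seven_sixths: "Polygamma 1 (5/6) + Polygamma 1 (7/6::real) = 4 * pi\<^sup>2 - 36"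
proof -
  have "Polygamma 1 (1/6) + Polygamma 1 (1 - 1/6::real) = pi\<^sup>2 / (sin (pi / 6))\<^sup>2"
    using Polygamma_1_reflection_real[of "1/6"] by simp
  moreover have "Polygamma 1 (1/6 + 1 :: real) = Polygamma 1 (1/6) + (-1) ^ 1 * fact 1 / ((1/6) ^ Suc 1)"
    by (rule Polygamma_plus1) simp
  ultimately show ?thesis by (simp add: sin_30 power_divide)
qed

lemma Polygamma_1_half: "Polygamma 1 (1/2::real) = pi\<^sup>2 / 2"
  using Polygamma_1_reflection_real[of "1/2"] by simp

text \<open>The block \<open>pent_block q j\<close> with each \<open>q^p\<close> replaced by \<open>n!/p^n = \<integral>\<^sub>0\<^sup>\<infinity> n t^(n-1) e^(-p t) dt\<close>.\<close>

definition pent_block_moment :: "nat \<Rightarrow> nat \<Rightarrow> real" where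
  "pent_block_moment n j =
     (fact n / real (pent_plus (2*j+1)) ^ n + fact n / real (pent_minus (2*j+1)) ^ n)
   - (fact n / real (pent_plus (2*j+2)) ^ n + fact n / real (pent_minus (2*j+2)) ^ n)"

lemma pent_block_moment_nonneg: "0 \<le> pent_block_moment n j"
proof -
  have antitone: "fact n / real b ^ n \<le> fact n / real a ^ n" if "0 < a" "a \<le> b" for a b :: nat
    using that by (intro divide_left_mono power_mono mult_pos_pos) auto
  show ?thesis
    using antitone[OF pent_plus_pos pent_plus_le_Suc, of "2*j+1"]
          antitone[OF pent_minus_pos pent_minus_le_Suc, of "2*j+1"]
    by (simp add: pent_block_moment_def)
qed

lemma of_nat_pent_block_indices:
  "real (pent_plus (2*j+1)) = (2 * real j + 1) * (3 * real j + 2)"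
  "real (pent_minus (2*j+1)) = (2 * real j + 1) * (3 * real j + 1)"
  "real (pent_plus (2*j+2)) = (real j + 1) * (6 * real j + 7)"
  "real (pent_minus (2*j+2)) = (real j + 1) * (6 * real j + 5)"
  by (simp_all only: of_nat_pent_plus of_nat_pent_minus) (simp_all add: algebra_simps)

lemma pent_block_moment_1_eq:
  "pent_block_moment 1 j = (1 / (real j + 1/3) - 1 / (real j + 2/3)) + (1 / (real j + 7/6) - 1 / (real j + 5/6))"
proof -
  have "real j \<ge> 0" by simp
  then show ?thesis
    unfolding pent_block_moment_def of_nat_pent_block_indices
    by (simp add: divide_simps) (simp add: algebra_simps)
qed

lemma pent_block_moment_1_series_sums:
  "(\<lambda>j. (1 / (real j + 1/3) - 1 / (real j + 2/3)) + (1 / (real j + 7/6) - 1 / (real j + 5/6)))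
     sums (4 * sqrt 3 / 3 * pi - 6)"
proof -
  have "(\<lambda>j. (1 / (real j + 1/3) - 1 / (real j + 2/3)) + (1 / (real j + 7/6) - 1 / (real j + 5/6)))
          sums ((Digamma (2/3) - Digamma (1/3)) + (Digamma (5/6) - Digamma (7/6)))"
    by (intro sums_add Digamma_diff_sums) auto
  also have "(Digamma (2/3) - Digamma (1/3)) + (Digamma (5/6) - Digamma (7/6::real)) = 4 * sqrt 3 / 3 * pi - 6"
    by (simp add: Digamma_two_thirds_minus_one_third Digamma_five_sixths_minus_seven_sixths field_simps)
  finally show ?thesis .
qed

lemma pent_block_moment_1_sums: "pent_block_moment 1 sums (4 * sqrt 3 / 3 * pi - 6)"
  unfolding pent_block_moment_1_eq by (rule pent_block_moment_1_series_sums)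

lemma square_partial_fractions:
  fixes x u v :: real
  assumes "x + u \<noteq> 0" "x + v \<noteq> 0" "u \<noteq> v"
  shows "1 / ((x + u) * (x + v))\<^sup>2
           = (1 / (v - u))\<^sup>2 * (1 / (x + u)\<^sup>2 + 1 / (x + v)\<^sup>2) - 2 * (1 / (v - u)) ^ 3 * (1 / (x + u) - 1 / (x + v))"
  using assms by (simp add: divide_simps) algebra

lemma pent_block_moment_2_eq:
  "pent_block_moment 2 j =
     2 * (1 / (real j + 1/3)\<^sup>2 + 1 / (real j + 2/3)\<^sup>2) - 2 * (1 / (real j + 5/6)\<^sup>2 + 1 / (real j + 7/6)\<^sup>2)
   + 4 * (1 / (real j + 1/2)\<^sup>2) - 4 * (1 / (real j + 1)\<^sup>2)
   - 24 * ((1 / (real j + 1/3) - 1 / (real j + 2/3)) + (1 / (real j + 7/6) - 1 / (real j + 5/6)))"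
proof -
  define x where "x = real j"
  have x: "x \<ge> 0" by (simp add: x_def)
  have factor: "(2*x+1)*(3*x+2) = 6 * ((x + 1/2) * (x + 2/3))" "(2*x+1)*(3*x+1) = 6 * ((x + 1/3) * (x + 1/2))"
       "(x+1)*(6*x+7) = 6 * ((x + 1) * (x + 7/6))" "(x+1)*(6*x+5) = 6 * ((x + 5/6) * (x + 1))"
    by (simp_all add: algebra_simps)
  have scale: "\<And>a::real. 2 / (6 * a)\<^sup>2 = (1/18) * (1 / a\<^sup>2)"
    by (simp add: power_mult_distrib)
  have partial_fractions:
    "1 / ((x + 1/2) * (x + 2/3))\<^sup>2 = 36 * (1 / (x + 1/2)\<^sup>2 + 1 / (x + 2/3)\<^sup>2) - 432 * (1 / (x + 1/2) - 1 / (x + 2/3))"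
    "1 / ((x + 1/3) * (x + 1/2))\<^sup>2 = 36 * (1 / (x + 1/3)\<^sup>2 + 1 / (x + 1/2)\<^sup>2) - 432 * (1 / (x + 1/3) - 1 / (x + 1/2))"
    "1 / ((x + 1) * (x + 7/6))\<^sup>2 = 36 * (1 / (x + 1)\<^sup>2 + 1 / (x + 7/6)\<^sup>2) - 432 * (1 / (x + 1) - 1 / (x + 7/6))"
    "1 / ((x + 5/6) * (x + 1))\<^sup>2 = 36 * (1 / (x + 5/6)\<^sup>2 + 1 / (x + 1)\<^sup>2) - 432 * (1 / (x + 5/6) - 1 / (x + 1))"
    using square_partial_fractions[of x "1/2" "2/3"] square_partial_fractions[of x "1/3" "1/2"]
          square_partial_fractions[of x 1 "7/6"] square_partial_fractions[of x "5/6" 1] x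
    by simp_all
  have "pent_block_moment 2 j = (2 / ((2*x+1)*(3*x+2))\<^sup>2 + 2 / ((2*x+1)*(3*x+1))\<^sup>2)
                               - (2 / ((x+1)*(6*x+7))\<^sup>2 + 2 / ((x+1)*(6*x+5))\<^sup>2)"
    unfolding pent_block_moment_def of_nat_pent_block_indices x_def by simp
  also have "\<dots> = 2 * (1 / (x + 1/3)\<^sup>2 + 1 / (x + 2/3)\<^sup>2) - 2 * (1 / (x + 5/6)\<^sup>2 + 1 / (x + 7/6)\<^sup>2)
                  + 4 * (1 / (x + 1/2)\<^sup>2) - 4 * (1 / (x + 1)\<^sup>2)
                  - 24 * ((1 / (x + 1/3) - 1 / (x + 2/3)) + (1 / (x + 7/6) - 1 / (x + 5/6)))"
    unfolding factor scale partial_fractions by (simp add: algebra_simps)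
  finally show ?thesis by (simp only: x_def)
qed

lemma pent_block_moment_2_sums: "pent_block_moment 2 sums (216 - 4 * pi\<^sup>2 - 32 * sqrt 3 * pi)"
proof -
  have "(\<lambda>j. 1 / (real j + 1/3)\<^sup>2 + 1 / (real j + 2/3)\<^sup>2) sums (4 * pi\<^sup>2 / 3)"
    unfolding Polygamma_1_thirds[symmetric] by (intro sums_add Polygamma_1_sums) auto
  moreover have "(\<lambda>j. 1 / (real j + 5/6)\<^sup>2 + 1 / (real j + 7/6)\<^sup>2) sums (4 * pi\<^sup>2 - 36)"
    unfolding Polygamma_1_five_sixths_plus_seven_sixths[symmetric] by (intro sums_add Polygamma_1_sums) auto
  moreover have "(\<lambda>j. 1 / (real j + 1/2)\<^sup>2) sums (pi\<^sup>2 / 2)"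
    unfolding Polygamma_1_half[symmetric] by (intro Polygamma_1_sums) auto
  moreover have "(\<lambda>j. 1 / (real j + 1)\<^sup>2) sums (pi\<^sup>2 / 6)"
    using inverse_squares_sums by (simp add: add.commute)
  ultimately have sums_2: "pent_block_moment 2 sums
      (2 * (4 * pi\<^sup>2 / 3) - 2 * (4 * pi\<^sup>2 - 36) + 4 * (pi\<^sup>2 / 2) - 4 * (pi\<^sup>2 / 6) - 24 * (4 * sqrt 3 / 3 * pi - 6))"
    unfolding pent_block_moment_2_eq
    by (intro sums_diff sums_add sums_mult pent_block_moment_1_series_sums)
  have "2 * (4 * pi\<^sup>2 / 3) - 2 * (4 * pi\<^sup>2 - 36) + 4 * (pi\<^sup>2 / 2) - 4 * (pi\<^sup>2 / 6)
                   - 24 * (4 * sqrt 3 / 3 * pi - 6) = 216 - 4 * pi\<^sup>2 - 32 * sqrt 3 * pi"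
    by (simp add: field_simps)
  with sums_2 show ?thesis by (simp only:)
qed

section \<open>Moments from the tail series\<close>

lemma has_bochner_integral_power_exp:
  assumes "0 < k"
  shows "has_bochner_integral lborel (\<lambda>t. real (Suc i) * t ^ i * indicator {0<..} t * exp (-t) ^ k)
           (fact (Suc i) / real k ^ Suc i)"
proof (rule has_bochner_integral_nn_integral)
  define l where "l = real k"
  have l: "0 < l" using assms by (simp add: l_def)
  have "AE t in lborel. ennreal (real (Suc i) * t ^ i * indicator {0<..} t * exp (-t) ^ k)
          = ennreal (real (Suc i) / l) * ennreal (erlang_density 0 l t * t ^ i)"
    using AE_lborel_singleton[of 0]
  proof eventually_elim
    case (elim t)
    show ?case
    proof (cases "t > 0")
      case True
      then have "real (Suc i) * t ^ i * indicator {0<..} t * exp (-t) ^ k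
                   = real (Suc i) / l * (erlang_density 0 l t * t ^ i)"
        using l by (simp add: erlang_density_def l_def field_simps flip: exp_of_nat_mult)
      then have "ennreal (real (Suc i) * t ^ i * indicator {0<..} t * exp (-t) ^ k)
                   = ennreal (real (Suc i) / l * (erlang_density 0 l t * t ^ i))"
        by (rule arg_cong)
      also have "\<dots> = ennreal (real (Suc i) / l) * ennreal (erlang_density 0 l t * t ^ i)"
        by (rule ennreal_mult') (use l in simp)
      finally show ?thesis .
    qed (use elim in \<open>simp add: erlang_density_def\<close>)
  qed
  then have "(\<integral>\<^sup>+t. ennreal (real (Suc i) * t ^ i * indicator {0<..} t * exp (-t) ^ k) \<partial>lborel)
               = ennreal (real (Suc i) / l) * (\<integral>\<^sup>+t. ennreal (erlang_density 0 l t * t ^ i) \<partial>lborel)"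
    by (simp add: nn_integral_cong_AE nn_integral_cmult)
  also have "(\<integral>\<^sup>+t. ennreal (erlang_density 0 l t * t ^ i) \<partial>lborel) = ennreal (fact i / l ^ i)"
    using nn_integral_erlang_ith_moment[OF l, of 0 i] by simp
  also have "ennreal (real (Suc i) / l) * ennreal (fact i / l ^ i) = ennreal (fact (Suc i) / real k ^ Suc i)"
    using l by (simp add: l_def ennreal_mult''[symmetric] field_simps)
  finally show "(\<integral>\<^sup>+t. ennreal (real (Suc i) * t ^ i * indicator {0<..} t * exp (-t) ^ k) \<partial>lborel)
                  = ennreal (fact (Suc i) / real k ^ Suc i)" .
qed (auto split: split_indicator)

lemma has_bochner_integral_pent_block:
  "has_bochner_integral lborel (\<lambda>t. real (Suc i) * t ^ i * indicator {0<..} t * pent_block (exp (-t)) j)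
     (pent_block_moment (Suc i) j)"
proof -
  have "has_bochner_integral lborel
          (\<lambda>t. (real (Suc i) * t ^ i * indicator {0<..} t * exp (-t) ^ pent_plus (2*j+1)
              + real (Suc i) * t ^ i * indicator {0<..} t * exp (-t) ^ pent_minus (2*j+1))
             - (real (Suc i) * t ^ i * indicator {0<..} t * exp (-t) ^ pent_plus (2*j+2)
              + real (Suc i) * t ^ i * indicator {0<..} t * exp (-t) ^ pent_minus (2*j+2)))
          (pent_block_moment (Suc i) j)"
    unfolding pent_block_moment_def
    by (intro has_bochner_integral_diff has_bochner_integral_add has_bochner_integral_power_exp
              pent_plus_pos pent_minus_pos) simp_all
  then show ?thesis
    by (simp add: pent_block_def algebra_simps)
qed

lemma nn_integral_pent_block_series:
  fixes G :: "real \<Rightarrow> real"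
  assumes G: "\<And>t. t > 0 \<Longrightarrow> pent_block (exp (-t)) sums G t"
    and V: "pent_block_moment (Suc i) sums V"
  shows "(\<integral>\<^sup>+t. ennreal (real (Suc i) * t ^ i * indicator {0<..} t * G t) \<partial>lborel) = ennreal V"
proof -
  define w where "w t = real (Suc i) * t ^ i * indicator {0<..} t" for t :: real
  have term_nonneg: "0 \<le> w t * pent_block (exp (-t)) j" for t j
    by (cases "t > 0") (auto simp: w_def intro!: mult_nonneg_nonneg pent_block_nonneg)
  have "(\<integral>\<^sup>+t. ennreal (w t * G t) \<partial>lborel) = (\<integral>\<^sup>+t. (\<Sum>j. ennreal (w t * pent_block (exp (-t)) j)) \<partial>lborel)"
  proof (rule nn_integral_cong)
    fix t :: real
    show "ennreal (w t * G t) = (\<Sum>j. ennreal (w t * pent_block (exp (-t)) j))"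
    proof (cases "t > 0")
      case True
      then have "(\<lambda>j. w t * pent_block (exp (-t)) j) sums (w t * G t)"
        by (intro sums_mult G)
      then show ?thesis
        using term_nonneg by (simp add: suminf_ennreal2 sums_iff)
    qed (simp add: w_def)
  qed
  also have "\<dots> = (\<Sum>j. \<integral>\<^sup>+t. ennreal (w t * pent_block (exp (-t)) j) \<partial>lborel)"
    by (rule nn_integral_suminf) (simp add: w_def pent_block_def)
  also have "\<dots> = (\<Sum>j. ennreal (pent_block_moment (Suc i) j))"
  proof (rule suminf_cong)
    fix j
    have "integrable lborel (\<lambda>t. w t * pent_block (exp (-t)) j)"
      "integral\<^sup>L lborel (\<lambda>t. w t * pent_block (exp (-t)) j) = pent_block_moment (Suc i) j"
      using has_bochner_integral_pent_block[of i j] by (simp_all add: w_def has_bochner_integral_iff)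
    then show "(\<integral>\<^sup>+t. ennreal (w t * pent_block (exp (-t)) j) \<partial>lborel) = ennreal (pent_block_moment (Suc i) j)"
      using term_nonneg pent_block_moment_nonneg
      by (subst nn_integral_eq_integrable) (auto intro: borel_measurable_integrable)
  qed
  also have "\<dots> = ennreal V"
    using V pent_block_moment_nonneg by (simp add: suminf_ennreal2 sums_iff)
  finally show ?thesis by (simp add: w_def)
qed

lemma (in sigma_finite_measure) nn_integral_layer_cake:
  fixes Y :: "'a \<Rightarrow> real" and h H :: "real \<Rightarrow> real"
  assumes [measurable]: "Y \<in> borel_measurable M" "h \<in> borel_measurable borel"
    and Y_nonneg: "AE \<omega> in M. 0 \<le> Y \<omega>"
    and H: "\<And>x. x \<ge> 0 \<Longrightarrow> (\<integral>\<^sup>+t. ennreal (h t) * indicator {0..x} t \<partial>lborel) = ennreal (H x)"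
  shows "(\<integral>\<^sup>+\<omega>. ennreal (H (Y \<omega>)) \<partial>M) =
           (\<integral>\<^sup>+t. ennreal (h t) * indicator {0<..} t * emeasure M {\<omega>\<in>space M. t < Y \<omega>} \<partial>lborel)"
proof -
  interpret pair_sigma_finite M lborel
    by (intro pair_sigma_finite.intro sigma_finite_measure_axioms lborel.sigma_finite_measure_axioms)
  define f where "f \<omega> t = (if 0 < t \<and> t < Y \<omega> then ennreal (h t) else 0)" for \<omega> t
  have [measurable]: "(\<lambda>(\<omega>, t). f \<omega> t) \<in> borel_measurable (M \<Otimes>\<^sub>M lborel)"
    unfolding f_def by measurable
  have "(\<integral>\<^sup>+\<omega>. ennreal (H (Y \<omega>)) \<partial>M) = (\<integral>\<^sup>+\<omega>. (\<integral>\<^sup>+t. f \<omega> t \<partial>lborel) \<partial>M)"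
    using Y_nonneg
  proof (intro nn_integral_cong_AE, eventually_elim)
    case (elim \<omega>)
    have "(\<integral>\<^sup>+t. f \<omega> t \<partial>lborel) = (\<integral>\<^sup>+t. ennreal (h t) * indicator {0..Y \<omega>} t \<partial>lborel)"
      using AE_lborel_singleton[of 0] AE_lborel_singleton[of "Y \<omega>"]
      by (intro nn_integral_cong_AE, eventually_elim) (auto simp: f_def split: split_indicator)
    with H[of "Y \<omega>"] elim show ?case by simp
  qed
  also have "\<dots> = (\<integral>\<^sup>+t. (\<integral>\<^sup>+\<omega>. f \<omega> t \<partial>M) \<partial>lborel)"
    by (rule Fubini'[symmetric]) measurable
  also have "\<dots> = (\<integral>\<^sup>+t. ennreal (h t) * indicator {0<..} t * emeasure M {\<omega>\<in>space M. t < Y \<omega>} \<partial>lborel)"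
  proof (rule nn_integral_cong)
    fix t :: real
    have "(\<integral>\<^sup>+\<omega>. f \<omega> t \<partial>M)
            = (\<integral>\<^sup>+\<omega>. (ennreal (h t) * indicator {0<..} t) * indicator {\<omega>\<in>space M. t < Y \<omega>} \<omega> \<partial>M)"
      by (rule nn_integral_cong) (auto simp: f_def split: split_indicator)
    also have "\<dots> = ennreal (h t) * indicator {0<..} t * emeasure M {\<omega>\<in>space M. t < Y \<omega>}"
      by (rule nn_integral_cmult_indicator) measurable
    finally show "(\<integral>\<^sup>+\<omega>. f \<omega> t \<partial>M) = ennreal (h t) * indicator {0<..} t * emeasure M {\<omega>\<in>space M. t < Y \<omega>}" .
  qed
  finally show ?thesis .
qed

text \<open>On unbounded sets the real \<open>Sup\<close> returns a junk value, the same for all of them;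
  \<open>sup_X\<close> takes this value on the null set where the \<open>X i\<close> are unbounded.\<close>

lemma Sup_real_unbounded: "\<not> bdd_above S \<Longrightarrow> Sup S = Sup (UNIV :: real set)"
proof -
  assume "\<not> bdd_above S"
  then have "(\<lambda>z. \<forall>x\<in>S. x \<le> z) = (\<lambda>z. False)"
    by (force simp: bdd_above_def fun_eq_iff)
  moreover have "(\<lambda>z::real. \<forall>x\<in>UNIV. x \<le> z) = (\<lambda>z. False)"
    by (auto simp: fun_eq_iff not_le gt_ex)
  ultimately show ?thesis by (simp add: Sup_real_def)
qed

section \<open>The maximum of independent exponential variables\<close>

locale exponential_maximum = prob_space +
  fixes X :: "nat \<Rightarrow> 'a \<Rightarrow> real"
  assumes indep: "indep_vars (\<lambda>_. borel) X {1..}"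
    and exponential: "\<And>i. i \<ge> 1 \<Longrightarrow> distributed M lborel (X i) (exponential_density (real i))"
begin

definition sup_X :: "'a \<Rightarrow> real" where
  "sup_X \<omega> = (SUP i\<in>{1..}. X i \<omega>)"

lemma X_measurable: "i \<ge> 1 \<Longrightarrow> X i \<in> borel_measurable M"
  using exponential_distributed_iff[of "real i" "X i"] exponential[of i] by simp

lemma sets_Collect_all_X_le:
  assumes "I \<subseteq> {1..}"
  shows "{\<omega>\<in>space M. \<forall>i\<in>I. X i \<omega> \<le> t} \<in> sets M"
proof (rule sets.sets_Collect_countable_All')
  fix i assume "i \<in> I"
  with assms have "i \<ge> 1" by auto
  then have [measurable]: "X i \<in> borel_measurable M" by (rule X_measurable)
  show "{\<omega>\<in>space M. X i \<omega> \<le> t} \<in> sets M" by measurable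
qed simp

lemma prob_X_gt: "i \<ge> 1 \<Longrightarrow> 0 \<le> t \<Longrightarrow> prob {\<omega>\<in>space M. t < X i \<omega>} = exp (-t) ^ i"
  using exponential_distributedD_gt[OF exponential] by (simp add: mult.commute flip: exp_of_nat_mult)

lemma prob_X_le: "i \<ge> 1 \<Longrightarrow> 0 \<le> t \<Longrightarrow> prob {\<omega>\<in>space M. X i \<omega> \<le> t} = 1 - exp (-t) ^ i"
  using exponential_distributedD_le[OF exponential] by (simp add: mult.commute flip: exp_of_nat_mult)

lemma AE_X_nonneg: "AE \<omega> in M. \<forall>i\<in>{1..}. 0 \<le> X i \<omega>"
proof -
  have "AE \<omega> in M. 1 \<le> i \<longrightarrow> 0 \<le> X i \<omega>" for i
  proof (cases "i \<ge> 1")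
    case True
    have "AE \<omega> in M. \<omega> \<in> {\<omega>\<in>space M. 0 < X i \<omega>}"
      by (rule AE_prob_1) (simp add: prob_X_gt[OF True])
    then show ?thesis by eventually_elim auto
  qed simp
  then show ?thesis
    unfolding Ball_def atLeast_iff by (subst AE_all_countable) simp
qed

text \<open>Borel--Cantelli: \<open>\<Sum>\<^sub>n P(X\<^sub>n > 1) = \<Sum>\<^sub>n e\<^sup>-\<^sup>n < \<infinity>\<close>.\<close>

lemma AE_bdd_above_X: "AE \<omega> in M. bdd_above ((\<lambda>i. X i \<omega>) ` {1..})"
proof -
  define A where "A n = {\<omega>\<in>space M. 1 < X (Suc n) \<omega>}" for n
  have A_sets: "A n \<in> sets M" for n
  proof -
    have [measurable]: "X (Suc n) \<in> borel_measurable M" by (simp add: X_measurable)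
    show ?thesis unfolding A_def by measurable
  qed
  have "summable (\<lambda>n. exp (-1) * exp (-1::real) ^ n)"
    by (intro summable_mult summable_geometric) simp
  then have "summable (\<lambda>n. measure M (A n))"
    by (simp add: A_def prob_X_gt)
  then have "AE \<omega> in M. eventually (\<lambda>n. \<omega> \<in> space M - A n) sequentially"
    by (intro borel_cantelli_AE1 A_sets) (simp_all add: emeasure_eq_measure)
  then show ?thesis
  proof eventually_elim
    case (elim \<omega>)
    then obtain N where N: "\<And>n. n \<ge> N \<Longrightarrow> X (Suc n) \<omega> \<le> 1"
      by (auto simp: eventually_sequentially A_def not_less)
    have "X i \<omega> \<le> 1 + (\<Sum>j\<in>{1..N}. \<bar>X j \<omega>\<bar>)" if "i \<ge> 1" for i
    proof (cases "i \<le> N")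
      case True
      have "X i \<omega> \<le> (\<Sum>j\<in>{1..N}. \<bar>X j \<omega>\<bar>)"
        using member_le_sum[of i "{1..N}" "\<lambda>j. \<bar>X j \<omega>\<bar>"] True that by simp
      then show ?thesis by simp
    next
      case False
      then have "X i \<omega> \<le> 1"
        using N[of "i - 1"] that by simp
      moreover have "0 \<le> (\<Sum>j\<in>{1..N}. \<bar>X j \<omega>\<bar>)" by (simp add: sum_nonneg)
      ultimately show ?thesis by linarith
    qed
    then show ?case by (auto simp: bdd_above_def)
  qed
qed

lemma sup_X_le_iff:
  "bdd_above ((\<lambda>i. X i \<omega>) ` {1..}) \<Longrightarrow> sup_X \<omega> \<le> t \<longleftrightarrow> (\<forall>i\<in>{1..}. X i \<omega> \<le> t)"
  unfolding sup_X_def by (rule cSUP_le_iff) auto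

lemma sup_X_measurable [measurable]: "sup_X \<in> borel_measurable M"
proof (rule borel_measurableI_le)
  fix y :: real
  define B where "B = {\<omega>\<in>space M. bdd_above ((\<lambda>i. X i \<omega>) ` {1..})}"
  have "B = (\<Union>n::nat. {\<omega>\<in>space M. \<forall>i\<in>{1..}. X i \<omega> \<le> real n})"
    by (auto simp: B_def bdd_above_def) (meson order_trans real_arch_simple)
  then have B_sets: "B \<in> sets M"
    using sets_Collect_all_X_le by auto
  have "{\<omega>\<in>space M. sup_X \<omega> \<le> y}
          = (B \<inter> {\<omega>\<in>space M. \<forall>i\<in>{1..}. X i \<omega> \<le> y})
            \<union> ((space M - B) \<inter> (if Sup (UNIV :: real set) \<le> y then space M else {}))" (is "?L = ?R")
  proof (rule set_eqI)
    fix \<omega>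
    show "\<omega> \<in> ?L \<longleftrightarrow> \<omega> \<in> ?R"
    proof (cases "bdd_above ((\<lambda>i. X i \<omega>) ` {1..})")
      case False
      then have "sup_X \<omega> = Sup (UNIV :: real set)"
        unfolding sup_X_def by (rule Sup_real_unbounded)
      with False show ?thesis by (auto simp: B_def)
    qed (auto simp: B_def sup_X_le_iff)
  qed
  also have "\<dots> \<in> sets M"
    using B_sets sets_Collect_all_X_le[of "{1..}" y] by auto
  finally show "{\<omega>\<in>space M. sup_X \<omega> \<le> y} \<in> sets M" .
qed

lemma AE_sup_X_nonneg: "AE \<omega> in M. 0 \<le> sup_X \<omega>"
  using AE_bdd_above_X AE_X_nonneg
proof eventually_elim
  case (elim \<omega>)
  then have "0 \<le> X 1 \<omega>" by auto
  also have "X 1 \<omega> \<le> sup_X \<omega>"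
    unfolding sup_X_def by (rule cSUP_upper) (use elim in auto)
  finally show ?case .
qed

lemma prod_tendsto_prob_sup_X_le:
  assumes "0 \<le> t"
  shows "(\<lambda>n. \<Prod>i=1..n. 1 - exp (-t) ^ i) \<longlonglongrightarrow> prob {\<omega>\<in>space M. sup_X \<omega> \<le> t}"
proof -
  define A where "A n = {\<omega>\<in>space M. \<forall>i\<in>{1..n}. X i \<omega> \<le> t}" for n
  have A_sets: "A n \<in> sets M" for n
    unfolding A_def by (rule sets_Collect_all_X_le) auto
  have "prob (A n) = (\<Prod>i=1..n. 1 - exp (-t) ^ i)" for n
  proof (cases "n = 0")
    case False
    then have "A n = (\<Inter>i\<in>{1..n}. X i -` {..t} \<inter> space M)"
      by (auto simp: A_def)
    moreover have "prob (\<Inter>i\<in>{1..n}. X i -` {..t} \<inter> space M) = (\<Prod>i=1..n. prob (X i -` {..t} \<inter> space M))"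
      using False by (intro indep_varsD[OF indep]) auto
    moreover have "prob (X i -` {..t} \<inter> space M) = 1 - exp (-t) ^ i" if "i \<in> {1..n}" for i
      using prob_X_le[of i t] that assms by (simp add: vimage_def Int_def conj_commute)
    ultimately show ?thesis by simp
  qed (simp add: A_def prob_space)
  moreover have "(\<lambda>n. prob (A n)) \<longlonglongrightarrow> prob (\<Inter>n. A n)"
    using A_sets by (intro finite_Lim_measure_decseq) (auto simp: decseq_def A_def)
  moreover have "prob (\<Inter>n. A n) = prob {\<omega>\<in>space M. sup_X \<omega> \<le> t}"
  proof (rule measure_eq_AE)
    show "AE \<omega> in M. (\<omega> \<in> (\<Inter>n. A n)) = (\<omega> \<in> {\<omega>\<in>space M. sup_X \<omega> \<le> t})"
      using AE_bdd_above_X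
      by eventually_elim (auto simp: A_def sup_X_le_iff, meson atLeastAtMost_iff order_refl)
  qed (use A_sets in auto)
  ultimately show ?thesis by simp
qed

lemma pent_block_sums_prob_sup_X_gt:
  assumes "0 < t"
  shows "pent_block (exp (-t)) sums prob {\<omega>\<in>space M. t < sup_X \<omega>}"
proof -
  have "{\<omega>\<in>space M. t < sup_X \<omega>} = space M - {\<omega>\<in>space M. sup_X \<omega> \<le> t}" by auto
  then have "prob {\<omega>\<in>space M. t < sup_X \<omega>} = 1 - prob {\<omega>\<in>space M. sup_X \<omega> \<le> t}"
    by (simp add: prob_compl)
  moreover have "pent_block (exp (-t)) sums (1 - prob {\<omega>\<in>space M. sup_X \<omega> \<le> t})"
    using assms by (intro pent_block_sums prod_tendsto_prob_sup_X_le) simp_all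
  ultimately show ?thesis by simp
qed

lemma sup_X_power_moment:
  assumes V: "pent_block_moment (Suc i) sums V"
  shows "integrable M (\<lambda>\<omega>. sup_X \<omega> ^ Suc i) \<and> expectation (\<lambda>\<omega>. sup_X \<omega> ^ Suc i) = V"
proof -
  have "(\<integral>\<^sup>+t. ennreal (real (Suc i) * t ^ i) * indicator {0..x} t \<partial>lborel) = ennreal (x ^ Suc i)"
    if "0 \<le> x" for x
    using that DERIV_pow[of "Suc i"]
    by (subst nn_integral_FTC_Icc[where F = "\<lambda>x. x ^ Suc i"]) (auto intro!: continuous_intros)
  then have "(\<integral>\<^sup>+\<omega>. ennreal (sup_X \<omega> ^ Suc i) \<partial>M)
      = (\<integral>\<^sup>+t. ennreal (real (Suc i) * t ^ i) * indicator {0<..} t * emeasure M {\<omega>\<in>space M. t < sup_X \<omega>} \<partial>lborel)"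
    by (intro nn_integral_layer_cake AE_sup_X_nonneg) auto
  also have "\<dots> = (\<integral>\<^sup>+t. ennreal (real (Suc i) * t ^ i * indicator {0<..} t * prob {\<omega>\<in>space M. t < sup_X \<omega>}) \<partial>lborel)"
    by (intro nn_integral_cong) (auto simp: emeasure_eq_measure ennreal_mult split: split_indicator)
  also have "\<dots> = ennreal V"
    by (intro nn_integral_pent_block_series pent_block_sums_prob_sup_X_gt V)
  finally have "(\<integral>\<^sup>+\<omega>. ennreal (sup_X \<omega> ^ Suc i) \<partial>M) = ennreal V" .
  moreover have "0 \<le> V"
    using sums_le[OF _ sums_zero V] pent_block_moment_nonneg by blast
  ultimately show ?thesis
    using AE_sup_X_nonneg by (subst (asm) nn_integral_eq_integrable) auto
qed

end

theorem theorem1: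
  fixes P :: "'a measure" and X :: "nat \<Rightarrow> 'a \<Rightarrow> real"
  assumes "prob_space P"
    and "prob_space.indep_vars P (\<lambda>_. borel) X {1..}"
    and "\<And>i. i \<ge> 1 \<Longrightarrow> distributed P lborel (X i) (exponential_density (real i))"
  defines "M \<equiv> (\<lambda>\<omega>. SUP i\<in>{1..}. X i \<omega>)"
  shows "integrable P M \<and>
         prob_space.expectation P M = 4 * sqrt 3 / 3 * pi - 6 \<and>
         prob_space.variance P M = - 28 / 3 * pi\<^sup>2 - 16 * sqrt 3 * pi + 180"
proof -
  interpret exponential_maximum P X
    using assms by (simp add: exponential_maximum_def exponential_maximum_axioms_def)
  have M: "M = sup_X"
    by (simp add: M_def sup_X_def fun_eq_iff)
  have int_M: "integrable P M" and E_M: "expectation M = 4 * sqrt 3 / 3 * pi - 6"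
    using sup_X_power_moment[of 0] pent_block_moment_1_sums by (simp_all add: M)
  have int_M2: "integrable P (\<lambda>\<omega>. (M \<omega>)\<^sup>2)"
    and E_M2: "expectation (\<lambda>\<omega>. (M \<omega>)\<^sup>2) = 216 - 4 * pi\<^sup>2 - 32 * sqrt 3 * pi"
    using sup_X_power_moment[of 1] pent_block_moment_2_sums by (simp_all add: M power2_eq_square numeral_2_eq_2)
  have "variance M = (216 - 4 * pi\<^sup>2 - 32 * sqrt 3 * pi) - (4 * sqrt 3 / 3 * pi - 6)\<^sup>2"
    using variance_eq[OF int_M int_M2] E_M E_M2 by simp
  also have "\<dots> = - 28 / 3 * pi\<^sup>2 - 16 * sqrt 3 * pi + 180"
    by (simp add: power2_eq_square algebra_simps)
  finally show ?thesis
    using int_M E_M by simp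
qed

end
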